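(* $z_{\mathrm{LC}}=z_D$, where $$z_{\mathrm{LC}}:=\inf\Big\{c^Tx+\sum_{s\in S}p_s\theta_s:\ (x,\theta_s)\in P_s(\mathbb{R}^n\times\mathbb{R}_+)\ \text{for all } s\in S\Big\}$$ (the infimum being over $x\in\mathbb{R}^n$ and $(\theta_s)_{s\in S}\in\mathbb{R}^S$), and $$z_D:=\sup\Big\{z(\lambda):\ \lambda=(\lambda^s)_{s\in S}\in(\mathbb{R}^n)^S,\ \sum_{s\in S}p_s\lambda^s=0\Big\},\qquad z(\lambda):=\sum_{s\in S}p_s\min_{(x^s,y^s)\in K^s}\big\{c^Tx^s+(q^s)^Ty^s+(\lambda^s)^Tx^s\big\}.$$
   Context: Two-stage stochastic integer program with finite scenario set $S$ and probabilities $p_s>0$, $\sum_{s\in S}p_s=1$. Data: $c\in\mathbb{R}^n$, matrix $A$ and vector $b$, and for each $s\in S$ matrices $T^s,W^s$ and vectors $h^s,q^s$ (all data rational). $X=\{x\in\mathbb{R}^n: x_j\in\mathbb{Z},\ j\in J_X\}$ and $Y=\{y\in\mathbb{R}^{n_y}: y_j\in\mathbb{Z},\ j\in J_Y\}$ for given index sets $J_X,J_Y$. For each $s$, $K^s:=\{(x,y)\in X\times Y: Ax\ge b,\ T^sx+W^sy\ge h^s\}$, assumed nonempty and bounded. Define $\overline{Q}_s^*:\mathbb{R}^n\times\mathbb{R}_+\to\mathbb{R}$ by $\overline{Q}_s^*(\pi,\pi_0)=\min\{\pi^Tx+\pi_0(q^s)^Ty:(x,y)\in K^s\}$. For $\Pi\subseteq\mathbb{R}^n\times\mathbb{R}_+$,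 $P_s(\Pi):=\{(x,\theta_s)\in\mathbb{R}^n\times\mathbb{R}:\ \pi^Tx+\pi_0\theta_s\ge\overline{Q}_s^*(\pi,\pi_0)\text{ for all }(\pi,\pi_0)\in\Pi\}$. *)

theory Defs
  imports "HOL-Analysis.Analysis"
begin

definition intpart :: "'i set \<Rightarrow> (real^'i) set" where
  "intpart J = {x. \<forall>j\<in>J. x $ j \<in> \<int>}"

text \<open>K^s: first-stage constraints A x >= b (rows indexed by type 'm),
  second-stage constraints T^s x + W^s y >= h^s with ms s rows (row i given by T s i, W s i, h s i).\<close>
definition Kset ::
  "real^'n^'m \<Rightarrow> real^'m \<Rightarrow> ('s \<Rightarrow> nat \<Rightarrow> real^'n) \<Rightarrow> ('s \<Rightarrow> nat \<Rightarrow> real^'ny)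
   \<Rightarrow> ('s \<Rightarrow> nat \<Rightarrow> real) \<Rightarrow> ('s \<Rightarrow> nat) \<Rightarrow> 'n set \<Rightarrow> 'ny set \<Rightarrow> 's
   \<Rightarrow> ((real^'n) \<times> (real^'ny)) set" where
  "Kset A b T W h ms JX JY s =
     {(x, y). x \<in> intpart JX \<and> y \<in> intpart JY \<and>
              (\<forall>i. b $ i \<le> (A *v x) $ i) \<and>
              (\<forall>i<ms s. h s i \<le> T s i \<bullet> x + W s i \<bullet> y)}"

definition Qstar ::
  "('s \<Rightarrow> ((real^'n) \<times> (real^'ny)) set) \<Rightarrow> ('s \<Rightarrow> real^'ny) \<Rightarrow> 's \<Rightarrow> real^'n \<Rightarrow> real \<Rightarrow> real" where
  "Qstar K q s \<pi> \<pi>0 = Inf ((\<lambda>(x, y). \<pi> \<bullet> x + \<pi>0 * (q s \<bullet> y)) ` K s)"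

definition Pset ::
  "('s \<Rightarrow> ((real^'n) \<times> (real^'ny)) set) \<Rightarrow> ('s \<Rightarrow> real^'ny) \<Rightarrow> 's \<Rightarrow> ((real^'n) \<times> real) set
   \<Rightarrow> ((real^'n) \<times> real) set" where
  "Pset K q s Pis = {(x, \<theta>). \<forall>(\<pi>, \<pi>0) \<in> Pis. Qstar K q s \<pi> \<pi>0 \<le> \<pi> \<bullet> x + \<pi>0 * \<theta>}"

definition zLC ::
  "real^'n \<Rightarrow> ('s \<Rightarrow> real) \<Rightarrow> 's set \<Rightarrow> ('s \<Rightarrow> ((real^'n) \<times> (real^'ny)) set) \<Rightarrow> ('s \<Rightarrow> real^'ny) \<Rightarrow> ereal" where
  "zLC c p S K q =
     (INF z \<in> {(x, \<theta>). \<forall>s\<in>S. (x, \<theta> s) \<in> Pset K q s (UNIV \<times> {0..})}.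
        ereal (c \<bullet> fst z + (\<Sum>s\<in>S. p s * snd z s)))"

definition zlam ::
  "real^'n \<Rightarrow> ('s \<Rightarrow> real) \<Rightarrow> 's set \<Rightarrow> ('s \<Rightarrow> ((real^'n) \<times> (real^'ny)) set) \<Rightarrow> ('s \<Rightarrow> real^'ny)
   \<Rightarrow> ('s \<Rightarrow> real^'n) \<Rightarrow> real" where
  "zlam c p S K q lam =
     (\<Sum>s\<in>S. p s * Inf ((\<lambda>(x, y). c \<bullet> x + q s \<bullet> y + lam s \<bullet> x) ` K s))"

definition zD ::
  "real^'n \<Rightarrow> ('s \<Rightarrow> real) \<Rightarrow> 's set \<Rightarrow> ('s \<Rightarrow> ((real^'n) \<times> (real^'ny)) set) \<Rightarrow> ('s \<Rightarrow> real^'ny) \<Rightarrow> ereal" where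
  "zD c p S K q =
     (SUP lam \<in> {lam. (\<Sum>s\<in>S. p s *\<^sub>R lam s) = 0}. ereal (zlam c p S K q lam))"

end

theory Submission
  imports Defs
begin

(* Weak duality z_D <= z_LC is immediate: the inequality of P_s with (pi, pi_0) = (c + lambda^s, 1)
   bounds the s-th term of z(lambda).

   For the converse, replace K^s by the compact convex set E_s = conv {(x, p_s (q^s)^T y) : (x, y) in K^s}.
   Dividing the second coordinate of a point of E_s by p_s gives a point of P_s, so z_LC is at most the
   value of the convex problem  min {c^T x + sum_s t_s : (x, t_s) in E_s for all s}.  Lagrangian duality
   for the coupling constraint "all scenarios share x", proved one scenario at a time with a separating
   hyperplane, yields multipliers m_s with sum_s m_s = c whose dual value exceeds any given number below
   that minimum; lambda^s = m_s / p_s - c is then feasible for z_D and z(lambda) is exactly that dual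
   value. *)

definition lin_form :: "'a::real_inner \<Rightarrow> 'a \<times> real \<Rightarrow> real" where
  "lin_form \<nu> z = \<nu> \<bullet> fst z + snd z"

definition lower_support :: "('a::real_inner \<times> real) set \<Rightarrow> 'a \<Rightarrow> real" where
  "lower_support E \<nu> = Inf (lin_form \<nu> ` E)"

lemma lin_form_eq_inner: "lin_form \<nu> z = (\<nu>, 1) \<bullet> z"
  by (simp add: lin_form_def inner_prod_def)

lemma continuous_on_lin_form [continuous_intros]: "continuous_on X (lin_form \<nu>)"
  unfolding lin_form_def by (intro continuous_intros)

lemma bdd_below_lin_form: "compact E \<Longrightarrow> bdd_below (lin_form \<nu> ` E)"
  by (intro bounded_imp_bdd_below compact_imp_bounded compact_continuous_image continuous_on_lin_form)

lemma lower_support_le: "compact E \<Longrightarrow> z \<in> E \<Longrightarrow> lower_support E \<nu> \<le> lin_form \<nu> z"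
  unfolding lower_support_def by (intro cInf_lower imageI bdd_below_lin_form)

lemma lower_support_attained:
  assumes "compact E" "E \<noteq> {}"
  obtains z where "z \<in> E" "lower_support E \<nu> = lin_form \<nu> z"
proof -
  obtain z where "z \<in> E" "\<forall>w\<in>E. lin_form \<nu> z \<le> lin_form \<nu> w"
    using continuous_attains_inf[OF assms continuous_on_lin_form] by blast
  then show thesis
    using that unfolding lower_support_def by (metis cInf_eq_minimum imageE imageI)
qed

lemma Inf_inner_le_convex_hull:
  fixes w :: "'a::real_inner"
  assumes "bdd_below ((\<lambda>z. w \<bullet> z) ` G)" "z \<in> convex hull G"
  shows "Inf ((\<lambda>z. w \<bullet> z) ` G) \<le> w \<bullet> z"
proof -
  have "G \<subseteq> {z. w \<bullet> z \<ge> Inf ((\<lambda>z. w \<bullet> z) ` G)}"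
    using assms(1) by (auto intro: cInf_lower)
  then have "convex hull G \<subseteq> {z. w \<bullet> z \<ge> Inf ((\<lambda>z. w \<bullet> z) ` G)}"
    by (rule hull_minimal) (rule convex_halfspace_ge)
  then show ?thesis using assms(2) by blast
qed

lemma lower_support_convex_hull:
  assumes "compact G" "G \<noteq> {}"
  shows "lower_support (convex hull G) \<nu> = lower_support G \<nu>"
proof -
  obtain z where z: "z \<in> G" "lower_support G \<nu> = lin_form \<nu> z"
    using lower_support_attained[OF assms] .
  have "lower_support G \<nu> \<le> lin_form \<nu> w" if "w \<in> convex hull G" for w
    using Inf_inner_le_convex_hull[of "(\<nu>, 1)" G w] bdd_below_lin_form[OF assms(1), of \<nu>] that
    unfolding lower_support_def lin_form_eq_inner by simp
  then show ?thesis
    unfolding lower_support_def[of "convex hull G"]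
    using z hull_inc[OF z(1)] by (intro cInf_eq_minimum) auto
qed

definition fibrewise_add :: "('a \<times> real) set \<Rightarrow> ('a \<times> real) set \<Rightarrow> ('a \<times> real) set" where
  "fibrewise_add E F = {(x, t + t') | x t t'. (x, t) \<in> E \<and> (x, t') \<in> F}"

definition fibrewise_sum :: "'s set \<Rightarrow> ('s \<Rightarrow> ('a \<times> real) set) \<Rightarrow> ('a \<times> real) set" where
  "fibrewise_sum S E = {(x, \<Sum>s\<in>S. t s) | x t. \<forall>s\<in>S. (x, t s) \<in> E s}"

lemma compact_fibrewise_add:
  fixes E F :: "('a::real_normed_vector \<times> real) set"
  assumes "compact E" "compact F"
  shows "compact (fibrewise_add E F)"
proof -
  let ?f = "\<lambda>(z, w). (fst z, snd z + snd w)"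
  let ?X = "(E \<times> F) \<inter> {(z, w). fst z = fst w}"
  have "fibrewise_add E F = ?f ` ?X"
  proof (intro equalityI subsetI)
    fix z assume "z \<in> fibrewise_add E F"
    then obtain x t t' where "z = (x, t + t')" "(x, t) \<in> E" "(x, t') \<in> F"
      unfolding fibrewise_add_def by blast
    then show "z \<in> ?f ` ?X" by (intro image_eqI[of _ _ "((x, t), (x, t'))"]) auto
  next
    fix z assume "z \<in> ?f ` ?X"
    then show "z \<in> fibrewise_add E F" unfolding fibrewise_add_def by force
  qed
  moreover have "compact (?f ` ?X)"
    unfolding case_prod_unfold
    by (intro compact_continuous_image compact_Int_closed compact_Times assms closed_Collect_eq
        continuous_intros)
  ultimately show ?thesis by simp
qed

lemma convex_fibrewise_add:
  assumes "convex E" "convex F"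
  shows "convex (fibrewise_add E F)"
  unfolding convex_def
proof (intro ballI allI impI)
  fix z w and u v :: real
  assume "z \<in> fibrewise_add E F" "w \<in> fibrewise_add E F" and uv: "0 \<le> u" "0 \<le> v" "u + v = 1"
  then obtain x t t' y s s' where z: "z = (x, t + t')" "(x, t) \<in> E" "(x, t') \<in> F"
     and w: "w = (y, s + s')" "(y, s) \<in> E" "(y, s') \<in> F"
    unfolding fibrewise_add_def by blast
  have "(u *\<^sub>R x + v *\<^sub>R y, u * t + v * s) \<in> E"
    using convexD[OF assms(1) z(2) w(2) uv] by simp
  moreover have "(u *\<^sub>R x + v *\<^sub>R y, u * t' + v * s') \<in> F"
    using convexD[OF assms(2) z(3) w(3) uv] by simp
  moreover have "u *\<^sub>R z + v *\<^sub>R w = (u *\<^sub>R x + v *\<^sub>R y, (u * t + v * s) + (u * t' + v * s'))"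
    unfolding z w by (simp add: algebra_simps)
  ultimately show "u *\<^sub>R z + v *\<^sub>R w \<in> fibrewise_add E F"
    unfolding fibrewise_add_def by auto
qed

lemma fibrewise_sum_singleton [simp]: "fibrewise_sum {a} E = E a"
  unfolding fibrewise_sum_def by force

lemma fibrewise_sum_insert:
  assumes "finite S" "a \<notin> S"
  shows "fibrewise_sum (insert a S) E = fibrewise_add (E a) (fibrewise_sum S E)"
proof
  show "fibrewise_sum (insert a S) E \<subseteq> fibrewise_add (E a) (fibrewise_sum S E)"
    unfolding fibrewise_sum_def fibrewise_add_def using assms by force
  show "fibrewise_add (E a) (fibrewise_sum S E) \<subseteq> fibrewise_sum (insert a S) E"
  proof
    fix z assume "z \<in> fibrewise_add (E a) (fibrewise_sum S E)"
    then obtain x ta t where z: "z = (x, ta + (\<Sum>s\<in>S. t s))" "(x, ta) \<in> E a"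
      and t: "\<forall>s\<in>S. (x, t s) \<in> E s"
      unfolding fibrewise_sum_def fibrewise_add_def by auto
    have "(\<Sum>s\<in>insert a S. (t(a := ta)) s) = ta + (\<Sum>s\<in>S. t s)"
      using assms by (simp, intro sum.cong) auto
    moreover have "\<forall>s\<in>insert a S. (x, (t(a := ta)) s) \<in> E s"
      using z t by auto
    ultimately show "z \<in> fibrewise_sum (insert a S) E"
      unfolding fibrewise_sum_def z(1) by (intro CollectI exI[of _ x] exI[of _ "t(a := ta)"]) simp
  qed
qed

lemma compact_convex_fibrewise_sum:
  fixes E :: "'s \<Rightarrow> ('a::real_normed_vector \<times> real) set"
  assumes "finite S" "S \<noteq> {}" "\<forall>s\<in>S. compact (E s) \<and> convex (E s)"
  shows "compact (fibrewise_sum S E) \<and> convex (fibrewise_sum S E)"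
  using assms
  by (induction S rule: finite_ne_induct)
    (simp_all add: fibrewise_sum_insert compact_fibrewise_add convex_fibrewise_add)

lemma fibrewise_add_separation:
  fixes E F :: "('a::euclidean_space \<times> real) set"
  assumes E: "compact E" "convex E" "E \<noteq> {}" and F: "compact F" "convex F" "F \<noteq> {}"
    and above: "\<forall>z\<in>fibrewise_add E F. r < lin_form \<mu> z"
  obtains a \<alpha> \<beta> where "\<alpha> \<ge> 0" "\<alpha> * r < \<beta>"
    "\<And>u t u' t'. (u, t) \<in> E \<Longrightarrow> (u', t') \<in> F \<Longrightarrow> \<beta> < a \<bullet> (u - u') + \<alpha> * (\<mu> \<bullet> u + t + t')"
proof -
  let ?f = "\<lambda>zw :: ('a \<times> real) \<times> ('a \<times> real).
    (fst (fst zw) - fst (snd zw), \<mu> \<bullet> fst (fst zw) + snd (fst zw) + snd (snd zw))"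
  \<comment> \<open>Pairs (coupling residual, objective value plus slack); the hypothesis says that \<open>(0, r) \<notin> D\<close>.\<close>
  define D where "D = (\<Union>d\<in>{0} \<times> {0..}. \<Union>e\<in>?f ` (E \<times> F). {d + e})"
  have "linear ?f"
    by (rule linearI) (auto simp: algebra_simps inner_add_right inner_scaleR_right)
  then have "convex D"
    unfolding D_def by (intro convex_sums convex_Times convex_linear_image E F) auto
  moreover have "closed D"
    unfolding D_def
    by (intro closed_compact_sums closed_Times compact_continuous_image compact_Times E F
        continuous_intros)
  moreover have "(0, r) \<notin> D"
  proof
    assume "(0, r) \<in> D"
    then obtain \<tau> u t u' t' where "\<tau> \<ge> 0" "(u, t) \<in> E" "(u', t') \<in> F"
      "(0, r) = (u - u', \<tau> + (\<mu> \<bullet> u + t + t'))"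
      unfolding D_def by auto
    then have "(u, t + t') \<in> fibrewise_add E F" "lin_form \<mu> (u, t + t') = r - \<tau>"
      unfolding fibrewise_add_def lin_form_def by auto
    with above \<open>\<tau> \<ge> 0\<close> show False by fastforce
  qed
  ultimately obtain w \<beta> where w: "w \<bullet> (0, r) < \<beta>" "\<forall>d\<in>D. \<beta> < w \<bullet> d"
    using separating_hyperplane_closed_point by blast
  define a where "a = fst w"
  define \<alpha> where "\<alpha> = snd w"
  have sep: "\<beta> < a \<bullet> (u - u') + \<alpha> * (\<mu> \<bullet> u + t + t' + \<tau>)"
    if "(u, t) \<in> E" "(u', t') \<in> F" "\<tau> \<ge> 0" for u t u' t' \<tau>
  proof -
    have "(0, \<tau>) + ?f ((u, t), (u', t')) \<in> D"
      unfolding D_def using that by force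
    then show ?thesis
      using w(2) by (fastforce simp: inner_prod_def a_def \<alpha>_def algebra_simps)
  qed
  have "\<alpha> \<ge> 0"
  proof (rule ccontr)
    assume "\<not> \<alpha> \<ge> 0"
    obtain u t u' t' where "(u, t) \<in> E" "(u', t') \<in> F"
      using E(3) F(3) by auto
    moreover define X where "X = a \<bullet> (u - u') + \<alpha> * (\<mu> \<bullet> u + t + t')"
    ultimately have "\<beta> < X + \<alpha> * (\<bar>X - \<beta>\<bar> / - \<alpha>)"
      using sep[of u t u' t' "\<bar>X - \<beta>\<bar> / - \<alpha>"] \<open>\<not> \<alpha> \<ge> 0\<close>
      by (simp add: divide_nonneg_neg algebra_simps)
    then show False using \<open>\<not> \<alpha> \<ge> 0\<close> by simp
  qed
  moreover have "\<alpha> * r < \<beta>"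
    using w(1) by (simp add: inner_prod_def \<alpha>_def)
  ultimately show thesis
    using that[of \<alpha> \<beta> a] sep[where \<tau> = 0] by simp
qed

lemma fibrewise_add_dual:
  fixes E F :: "('a::euclidean_space \<times> real) set"
  assumes E: "compact E" "convex E" "E \<noteq> {}" and F: "compact F" "convex F" "F \<noteq> {}"
    and above: "\<forall>z\<in>fibrewise_add E F. r < lin_form \<mu> z"
  obtains \<nu> where "r < lower_support E \<nu> + lower_support F (\<mu> - \<nu>)"
proof -
  note conclude = that
  obtain a \<alpha> \<beta> where \<alpha>: "\<alpha> \<ge> 0" "\<alpha> * r < \<beta>" and sep:
    "\<And>u t u' t'. (u, t) \<in> E \<Longrightarrow> (u', t') \<in> F \<Longrightarrow> \<beta> < a \<bullet> (u - u') + \<alpha> * (\<mu> \<bullet> u + t + t')"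
    using fibrewise_add_separation[OF E F above] by metis
  have tilt: thesis
    if "\<And>u t u' t'. (u, t) \<in> E \<Longrightarrow> (u', t') \<in> F \<Longrightarrow> r < \<mu> \<bullet> u + t + t' + k * (a \<bullet> (u - u'))"
    for k
  proof -
    obtain ze where ze: "ze \<in> E" "lower_support E (\<mu> + k *\<^sub>R a) = lin_form (\<mu> + k *\<^sub>R a) ze"
      using lower_support_attained[OF E(1,3)] .
    obtain zf where zf: "zf \<in> F" "lower_support F (- (k *\<^sub>R a)) = lin_form (- (k *\<^sub>R a)) zf"
      using lower_support_attained[OF F(1,3)] .
    have "r < lin_form (\<mu> + k *\<^sub>R a) ze + lin_form (- (k *\<^sub>R a)) zf"
      using that[of "fst ze" "snd ze" "fst zf" "snd zf"] ze(1) zf(1)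
      by (simp add: lin_form_def inner_add_left inner_diff_right algebra_simps)
    then show thesis
      using ze(2) zf(2) by (intro conclude[of "\<mu> + k *\<^sub>R a"]) simp
  qed
  show thesis
  proof (cases "\<alpha> = 0")
    case False
    with \<alpha>(1) have "\<alpha> > 0" by simp
    show thesis
    proof (rule tilt[of "1 / \<alpha>"])
      fix u t u' t' assume "(u, t) \<in> E" "(u', t') \<in> F"
      then have "\<alpha> * r < a \<bullet> (u - u') + \<alpha> * (\<mu> \<bullet> u + t + t')"
        using sep \<alpha>(2) by fastforce
      also have "\<dots> = \<alpha> * (\<mu> \<bullet> u + t + t' + 1 / \<alpha> * (a \<bullet> (u - u')))"
        using \<open>\<alpha> > 0\<close> by (simp add: field_simps)
      finally show "r < \<mu> \<bullet> u + t + t' + 1 / \<alpha> * (a \<bullet> (u - u'))"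
        using \<open>\<alpha> > 0\<close> by simp
    qed
  next
    case True
    \<comment> \<open>The hyperplane strictly separates the \<open>x\<close>-projections of \<open>E\<close> and \<open>F\<close>: tilting along it
      makes the dual value arbitrarily large.\<close>
    with \<alpha>(2) have "\<beta> > 0" by simp
    define M where "M = lower_support E \<mu> + lower_support F 0"
    show thesis
    proof (rule tilt[of "(\<bar>r - M\<bar> + 1) / \<beta>"])
      fix u t u' t' assume "(u, t) \<in> E" "(u', t') \<in> F"
      have "lower_support E \<mu> \<le> \<mu> \<bullet> u + t" "lower_support F 0 \<le> t'"
        using lower_support_le[OF E(1) \<open>(u, t) \<in> E\<close>, of \<mu>]
          lower_support_le[OF F(1) \<open>(u', t') \<in> F\<close>, of 0]
        by (simp_all add: lin_form_def)
      moreover have "(\<bar>r - M\<bar> + 1) / \<beta> * \<beta> < (\<bar>r - M\<bar> + 1) / \<beta> * (a \<bullet> (u - u'))"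
        using sep[OF \<open>(u, t) \<in> E\<close> \<open>(u', t') \<in> F\<close>] True \<open>\<beta> > 0\<close>
        by (intro mult_strict_left_mono) auto
      ultimately show "r < \<mu> \<bullet> u + t + t' + (\<bar>r - M\<bar> + 1) / \<beta> * (a \<bullet> (u - u'))"
        using \<open>\<beta> > 0\<close> unfolding M_def by simp
    qed
  qed
qed

lemma fibrewise_sum_dual:
  fixes E :: "'s \<Rightarrow> ('a::euclidean_space \<times> real) set"
  assumes "finite S" "S \<noteq> {}" "\<forall>s\<in>S. compact (E s) \<and> convex (E s) \<and> E s \<noteq> {}"
    and "\<forall>z\<in>fibrewise_sum S E. r < lin_form \<mu> z"
  shows "\<exists>m. (\<Sum>s\<in>S. m s) = \<mu> \<and> r < (\<Sum>s\<in>S. lower_support (E s) (m s))"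
  using assms
proof (induction S arbitrary: r \<mu> rule: finite_ne_induct)
  case (singleton a)
  then obtain z where "z \<in> E a" "lower_support (E a) \<mu> = lin_form \<mu> z"
    using lower_support_attained by blast
  then show ?case
    using singleton.prems by (intro exI[of _ "\<lambda>_. \<mu>"]) auto
next
  case (insert a S)
  let ?F = "fibrewise_sum S E"
  obtain \<nu> where \<nu>: "\<forall>z\<in>?F. r - lower_support (E a) \<nu> < lin_form (\<mu> - \<nu>) z"
  proof (cases "?F = {}")
    case True
    then show thesis using that[of 0] by simp
  next
    case False
    have F: "compact ?F" "convex ?F"
      using compact_convex_fibrewise_sum[of S E] insert by auto
    obtain \<nu> where "r < lower_support (E a) \<nu> + lower_support ?F (\<mu> - \<nu>)"
      using fibrewise_add_dual[of "E a" ?F r \<mu>] F False insert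
      by (auto simp: fibrewise_sum_insert)
    then have "\<forall>z\<in>?F. r - lower_support (E a) \<nu> < lin_form (\<mu> - \<nu>) z"
      using lower_support_le[OF F(1), of _ "\<mu> - \<nu>"] by fastforce
    then show thesis by (rule that)
  qed
  obtain m where m: "(\<Sum>s\<in>S. m s) = \<mu> - \<nu>"
    "r - lower_support (E a) \<nu> < (\<Sum>s\<in>S. lower_support (E s) (m s))"
    using insert.IH[OF _ \<nu>] insert.prems by auto
  have "(\<Sum>s\<in>S. (m(a := \<nu>)) s) = (\<Sum>s\<in>S. m s)"
    "(\<Sum>s\<in>S. lower_support (E s) ((m(a := \<nu>)) s)) = (\<Sum>s\<in>S. lower_support (E s) (m s))"
    using insert.hyps by (auto intro: sum.cong)
  then show ?case
    using insert.hyps m by (intro exI[of _ "m(a := \<nu>)"]) simp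
qed

lemma closed_intpart: "closed (intpart J)"
proof -
  have "intpart J = (\<Inter>j\<in>J. (\<lambda>x. x $ j) -` \<int>)"
    unfolding intpart_def by auto
  then show ?thesis
    by (simp add: closed_INT closed_vimage continuous_on_component)
qed

lemma compact_Kset:
  assumes "bounded (Kset A b T W h ms JX JY s)"
  shows "compact (Kset A b T W h ms JX JY s)"
proof -
  have "Kset A b T W h ms JX JY s = (intpart JX \<times> intpart JY)
      \<inter> (\<Inter>i. {z. b $ i \<le> A $ i \<bullet> fst z})
      \<inter> (\<Inter>i<ms s. {z. h s i \<le> T s i \<bullet> fst z + W s i \<bullet> snd z})"
    unfolding Kset_def by (auto simp: matrix_vector_mul_component)
  moreover have "closed \<dots>"
    by (intro closed_Int closed_Times closed_intpart closed_INT ballI closed_Collect_le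
        continuous_intros)
  ultimately show ?thesis
    using assms compact_eq_bounded_closed by metis
qed

lemma zD_le_zLC:
  fixes K :: "'s \<Rightarrow> ((real^'n) \<times> (real^'ny)) set"
  assumes "\<forall>s\<in>S. p s \<ge> 0" "(\<Sum>s\<in>S. p s) = 1"
  shows "zD c p S K q \<le> zLC c p S K q"
  unfolding zD_def zLC_def
proof (intro SUP_least INF_greatest)
  fix lam :: "'s \<Rightarrow> real^'n" and z
  assume lam: "lam \<in> {lam. (\<Sum>s\<in>S. p s *\<^sub>R lam s) = 0}"
    and "z \<in> {(x, \<theta>). \<forall>s\<in>S. (x, \<theta> s) \<in> Pset K q s (UNIV \<times> {0..})}"
  then obtain x \<theta> where z: "z = (x, \<theta>)" "\<forall>s\<in>S. (x, \<theta> s) \<in> Pset K q s (UNIV \<times> {0..})"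
    by auto
  have cut: "Inf ((\<lambda>(x, y). c \<bullet> x + q s \<bullet> y + lam s \<bullet> x) ` K s) \<le> (c + lam s) \<bullet> x + \<theta> s"
    if "s \<in> S" for s
  proof -
    have "Qstar K q s (c + lam s) 1 \<le> (c + lam s) \<bullet> x + 1 * \<theta> s"
      using z(2) that unfolding Pset_def by fastforce
    moreover have "Qstar K q s (c + lam s) 1 = Inf ((\<lambda>(x, y). c \<bullet> x + q s \<bullet> y + lam s \<bullet> x) ` K s)"
      unfolding Qstar_def by (intro arg_cong[where f = Inf] image_cong) (auto simp: inner_add_left)
    ultimately show ?thesis by simp
  qed
  have "zlam c p S K q lam \<le> (\<Sum>s\<in>S. p s * ((c + lam s) \<bullet> x + \<theta> s))"
    unfolding zlam_def using cut assms(1) by (intro sum_mono mult_left_mono) auto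
  also have "\<dots> = (\<Sum>s\<in>S. p s) * (c \<bullet> x) + (\<Sum>s\<in>S. p s *\<^sub>R lam s) \<bullet> x + (\<Sum>s\<in>S. p s * \<theta> s)"
    by (simp add: inner_add_left distrib_left sum.distrib sum_distrib_right inner_sum_left)
  also have "\<dots> = c \<bullet> x + (\<Sum>s\<in>S. p s * \<theta> s)"
    using lam assms(2) by simp
  finally show "ereal (zlam c p S K q lam) \<le> ereal (c \<bullet> fst z + (\<Sum>s\<in>S. p s * snd z s))"
    using z(1) by simp
qed

definition weighted_cost_image :: "real \<Rightarrow> 'b::real_inner \<Rightarrow> ('a \<times> 'b) set \<Rightarrow> ('a \<times> real) set" where
  "weighted_cost_image p q K = (\<lambda>(x, y). (x, p * (q \<bullet> y))) ` K"

lemma weighted_cost_image_eq_empty [simp]: "weighted_cost_image p q K = {} \<longleftrightarrow> K = {}"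
  by (simp add: weighted_cost_image_def)

lemma compact_weighted_cost_image:
  fixes K :: "('a::topological_space \<times> 'b::real_inner) set"
  shows "compact K \<Longrightarrow> compact (weighted_cost_image p q K)"
  unfolding weighted_cost_image_def case_prod_unfold
  by (intro compact_continuous_image continuous_intros)

lemma convex_hull_weighted_cost_image_in_Pset:
  fixes K :: "'s \<Rightarrow> ((real^'n) \<times> (real^'ny)) set"
  assumes "compact (K s)" "p > 0" "(x, t) \<in> convex hull weighted_cost_image p (q s) (K s)"
  shows "(x, t / p) \<in> Pset K q s (UNIV \<times> {0..})"
  unfolding Pset_def
proof (clarify)
  fix \<pi> :: "real^'n" and \<pi>0 :: real assume "\<pi>0 \<ge> 0"
  let ?w = "(\<pi>, \<pi>0 / p)"
  have "Qstar K q s \<pi> \<pi>0 = Inf ((\<lambda>z. ?w \<bullet> z) ` weighted_cost_image p (q s) (K s))"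
    unfolding Qstar_def weighted_cost_image_def image_image using assms(2)
    by (intro arg_cong[where f = Inf] image_cong) (auto simp: inner_prod_def)
  also have "\<dots> \<le> ?w \<bullet> (x, t)"
    using assms(1,3)
    by (intro Inf_inner_le_convex_hull bounded_imp_bdd_below compact_imp_bounded
        compact_continuous_image compact_weighted_cost_image continuous_intros)
  finally show "Qstar K q s \<pi> \<pi>0 \<le> \<pi> \<bullet> x + \<pi>0 * (t / p)"
    by (simp add: inner_prod_def)
qed

lemma lower_support_convex_hull_weighted_cost_image:
  fixes K :: "('a::euclidean_space \<times> 'b::euclidean_space) set"
  assumes "compact K" "K \<noteq> {}" "p > 0"
  shows "lower_support (convex hull weighted_cost_image p q K) (p *\<^sub>R (c + lam))
    = p * Inf ((\<lambda>(x, y). c \<bullet> x + q \<bullet> y + lam \<bullet> x) ` K)"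
proof -
  let ?f = "\<lambda>(x, y). c \<bullet> x + q \<bullet> y + lam \<bullet> x"
  have "lower_support (convex hull weighted_cost_image p q K) (p *\<^sub>R (c + lam))
      = lower_support (weighted_cost_image p q K) (p *\<^sub>R (c + lam))"
    using assms(1,2) compact_weighted_cost_image[OF assms(1)]
    by (simp add: lower_support_convex_hull weighted_cost_image_def)
  also have "\<dots> = Inf ((\<lambda>z. p * ?f z) ` K)"
    unfolding lower_support_def weighted_cost_image_def image_image
    by (intro arg_cong[where f = Inf] image_cong) (auto simp: lin_form_def algebra_simps)
  also have "\<dots> = p * Inf (?f ` K)"
  proof -
    have "bdd_below (?f ` K)"
      using assms(1) unfolding case_prod_unfold
      by (intro bounded_imp_bdd_below compact_imp_bounded compact_continuous_image continuous_intros)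
    moreover have "mono ((*) p)"
      using assms(3) by (intro monoI mult_left_mono) auto
    moreover have "continuous (at_right (Inf (?f ` K))) ((*) p)"
      by (intro continuous_intros)
    ultimately show ?thesis
      using continuous_at_Inf_mono[of "(*) p" "?f ` K"] assms(2) by (simp add: image_image)
  qed
  finally show ?thesis .
qed

lemma zlam_eq_sum_lower_support:
  assumes "\<forall>s\<in>S. p s > 0 \<and> compact (K s) \<and> K s \<noteq> {}"
  shows "zlam c p S K q lam = (\<Sum>s\<in>S.
    lower_support (convex hull weighted_cost_image (p s) (q s) (K s)) (p s *\<^sub>R (c + lam s)))"
  unfolding zlam_def using assms
  by (intro sum.cong refl lower_support_convex_hull_weighted_cost_image[symmetric]) auto

lemma zLC_le_lin_form:
  assumes "\<forall>s\<in>S. p s > 0 \<and> compact (K s)"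
    and "z \<in> fibrewise_sum S (\<lambda>s. convex hull weighted_cost_image (p s) (q s) (K s))"
  shows "zLC c p S K q \<le> ereal (lin_form c z)"
proof -
  obtain x t where z: "z = (x, \<Sum>s\<in>S. t s)"
    and t: "\<forall>s\<in>S. (x, t s) \<in> convex hull weighted_cost_image (p s) (q s) (K s)"
    using assms(2) unfolding fibrewise_sum_def by blast
  have "(x, \<lambda>s. t s / p s) \<in> {(x, \<theta>). \<forall>s\<in>S. (x, \<theta> s) \<in> Pset K q s (UNIV \<times> {0..})}"
    using assms(1) t convex_hull_weighted_cost_image_in_Pset by fastforce
  moreover have "(\<Sum>s\<in>S. p s * (t s / p s)) = (\<Sum>s\<in>S. t s)"
    using assms(1) by (intro sum.cong) auto
  ultimately show ?thesis
    unfolding zLC_def z lin_form_def by (force intro: INF_lower2)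
qed

lemma zLC_le_zD:
  fixes K :: "'s \<Rightarrow> ((real^'n) \<times> (real^'ny)) set"
  assumes S: "finite S" "(\<Sum>s\<in>S. p s) = 1"
    and K: "\<forall>s\<in>S. p s > 0 \<and> compact (K s) \<and> K s \<noteq> {}"
  shows "zLC c p S K q \<le> zD c p S K q"
proof (rule dense_le)
  fix y assume y: "y < zLC c p S K q"
  define E where "E s = convex hull weighted_cost_image (p s) (q s) (K s)" for s
  show "y \<le> zD c p S K q"
  proof (cases y)
    case (real r)
    have "\<forall>z\<in>fibrewise_sum S E. r < lin_form c z"
      using y real zLC_le_lin_form[of S p K _ q c] K unfolding E_def
      by (fastforce dest: less_le_trans)
    moreover have "\<forall>s\<in>S. compact (E s) \<and> convex (E s) \<and> E s \<noteq> {}"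
      using K unfolding E_def
      by (simp add: compact_convex_hull compact_weighted_cost_image)
    moreover have "S \<noteq> {}"
      using S(2) by auto
    ultimately obtain m where m: "(\<Sum>s\<in>S. m s) = c" "r < (\<Sum>s\<in>S. lower_support (E s) (m s))"
      using fibrewise_sum_dual[OF S(1)] by blast
    define lam where "lam s = (1 / p s) *\<^sub>R m s - c" for s
    have lam: "m s = p s *\<^sub>R (c + lam s)" "p s *\<^sub>R lam s = m s - p s *\<^sub>R c" if "s \<in> S" for s
      using K that by (auto simp: lam_def scaleR_right_diff_distrib)
    then have "zlam c p S K q lam = (\<Sum>s\<in>S. lower_support (E s) (m s))"
      using zlam_eq_sum_lower_support[OF K] unfolding E_def by simp
    moreover have "(\<Sum>s\<in>S. p s *\<^sub>R lam s) = 0"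
      using lam(2) S(2) m(1) by (simp add: sum_subtractf flip: scaleR_sum_left cong: sum.cong)
    ultimately show ?thesis
      unfolding zD_def using real m(2) by (force intro: SUP_upper2)
  qed (use y in auto)
qed

theorem theorem2:
  fixes c :: "real^'n" and A :: "real^'n^'m" and b :: "real^'m"
    and S :: "'s set" and p :: "'s \<Rightarrow> real"
    and T :: "'s \<Rightarrow> nat \<Rightarrow> real^'n" and W :: "'s \<Rightarrow> nat \<Rightarrow> real^'ny"
    and h :: "'s \<Rightarrow> nat \<Rightarrow> real" and ms :: "'s \<Rightarrow> nat"
    and q :: "'s \<Rightarrow> real^'ny" and JX :: "'n set" and JY :: "'ny set"
  assumes "finite S"
    and "\<forall>s\<in>S. p s > 0" and "(\<Sum>s\<in>S. p s) = 1"
    and "\<forall>j. c $ j \<in> \<rat>" and "\<forall>i j. A $ i $ j \<in> \<rat>" and "\<forall>i. b $ i \<in> \<rat>"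
    and "\<forall>s\<in>S. \<forall>i<ms s. (\<forall>j. T s i $ j \<in> \<rat>) \<and> (\<forall>j. W s i $ j \<in> \<rat>) \<and> h s i \<in> \<rat>"
    and "\<forall>s\<in>S. \<forall>j. q s $ j \<in> \<rat>"
    and "\<forall>s\<in>S. Kset A b T W h ms JX JY s \<noteq> {}"
    and "\<forall>s\<in>S. bounded (Kset A b T W h ms JX JY s)"
  shows "zLC c p S (Kset A b T W h ms JX JY) q = zD c p S (Kset A b T W h ms JX JY) q"
proof (rule antisym)
  show "zD c p S (Kset A b T W h ms JX JY) q \<le> zLC c p S (Kset A b T W h ms JX JY) q"
    using assms(2,3) by (intro zD_le_zLC) auto
  show "zLC c p S (Kset A b T W h ms JX JY) q \<le> zD c p S (Kset A b T W h ms JX JY) q"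
    using assms(1-3,9,10) by (intro zLC_le_zD) (auto intro: compact_Kset)
qed

end
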